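(* Consider the network system $\mathbf{\Sigma}$ and, for a given clustering matrix $\Pi\in\mathbb{R}^{n\times r}$, the reduced network system $\hat{\mathbf{\Sigma}}$ (both described in the context). If the scalars $\alpha,\beta$ satisfy $\alpha\beta=\mathbf{tr}(\hat{E})/\mathbf{tr}(E)$, then the error system $\mathbf{\Sigma_e}=\mathbf{\Sigma}-\hat{\mathbf{\Sigma}}$ is BIBO stable for all $\hat{W}\in\mathbb{D}_{++}^{|\hat{\mathcal{E}}|}$ and all $\hat{E}\in\mathbb{D}_{++}^{r}$.
   Context: $\mathbb{D}_{++}^k$ denotes the set of $k\times k$ diagonal matrices with positive diagonal entries; $\mathbf{1}_k$ is the all-ones vector of length $k$. Let $\mathcal{G}$ be a simple, undirected, connected graph with node set $\{1,\dots,n\}$ and $|\mathcal{E}|$ edges, each edge labeled and given an arbitrary orientation. Its incidence matrix $D\in\mathbb{R}^{n\times|\mathcal{E}|}$ has $[D]_{il}=+1$ if edge $l$ is directed from node $i$, $-1$ if edge $l$ is directed towards node $i$, and $0$ otherwise. Let $W\in\mathbb{D}_{++}^{|\mathcal{E}|}$ (edge weights), $E\in\mathbb{D}_{++}^{n}$ (nodal time-scales), $L=DWD^T$, $F\in\mathbb{R}^{n\times p}$, $H\in\mathbb{R}^{q\times n}$. The network system $\mathbf{\Sigma}$ is $E\dot{x}=-Lx+Fu$, $y=Hx$, with transfer function $\mathbf{\Sigma}(s)=H(sI_n+E^{-1}L)^{-1}E^{-1}F$. A clustering is a partition of $\{1,\dots,n\}$ into $r$ nonempty disjoint clusters $\mathcal{C}_1,\dots,\mathcal{C}_r$,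 with characteristic matrix $\Pi\in\mathbb{R}^{n\times r}$, $[\Pi]_{ij}=1$ if $i\in\mathcal{C}_j$ and $0$ otherwise. The reduced incidence matrix $\hat{D}\in\mathbb{R}^{r\times|\hat{\mathcal{E}}|}$ is obtained from $\Pi^TD$ by removing all zero columns and all duplicate columns. For $\hat{W}\in\mathbb{D}_{++}^{|\hat{\mathcal{E}}|}$, $\hat{E}\in\mathbb{D}_{++}^{r}$ and scalars $\alpha,\beta$, set $\hat{L}=\hat{D}\hat{W}\hat{D}^T$, $\hat{F}=\Pi^TF$, $\hat{H}=H\Pi$; the reduced system $\hat{\mathbf{\Sigma}}$ is $\hat{E}\dot{\hat{x}}=-\hat{L}\hat{x}+\beta\hat{F}u$, $\hat{y}=\alpha\hat{H}\hat{x}$, with transfer function $\hat{\mathbf{\Sigma}}(s)=\alpha\hat{H}(sI_r+\hat{E}^{-1}\hat{L})^{-1}\beta\hat{E}^{-1}\hat{F}$. The error system $\mathbf{\Sigma_e}$ has transfer function $\mathbf{\Sigma}(s)-\hat{\mathbf{\Sigma}}(s)$ (realized by the block-diagonal state matrix $\mathrm{diag}(-E^{-1}L,-\hat{E}^{-1}\hat{L})$, input matrix $[E^{-1}F;\beta\hat{E}^{-1}\hat{F}]$ and output matrix $[H,\,-\alpha\hat{H}]$). BIBO stable means all poles of the transfer function have negative real part. *)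

theory Defs
  imports "HOL-Analysis.Analysis" "HOL-Complex_Analysis.Complex_Analysis"
begin

definition diagm :: "('n::finite \<Rightarrow> 'a::zero) \<Rightarrow> 'a^'n^'n" where
  "diagm d = (\<chi> i j. if i = j then d i else 0)"

definition tr_diag :: "('n::finite \<Rightarrow> real) \<Rightarrow> real" where
  "tr_diag d = (\<Sum>i\<in>UNIV. d i)"

definition cmat :: "real^'c^'r \<Rightarrow> complex^'c^'r" where
  "cmat A = (\<chi> i j. complex_of_real (A $ i $ j))"

definition incidence_matrix :: "real^'e^'n \<Rightarrow> bool" where
  "incidence_matrix D \<longleftrightarrow>
     (\<forall>l. \<exists>i j. i \<noteq> j \<and> D $ i $ l = 1 \<and> D $ j $ l = -1 \<and>
                 (\<forall>k. k \<noteq> i \<and> k \<noteq> j \<longrightarrow> D $ k $ l = 0))"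

text \<open>Simple graph: no two edges join the same pair of nodes (in either orientation).
  Self-loops are already excluded by incidence_matrix.\<close>
definition simple_incidence :: "real^'e^'n \<Rightarrow> bool" where
  "simple_incidence D \<longleftrightarrow>
     (\<forall>l l'. l \<noteq> l' \<longrightarrow> column l D \<noteq> column l' D \<and> column l D \<noteq> - column l' D)"

definition adj :: "real^'e^'n \<Rightarrow> ('n \<times> 'n) set" where
  "adj D = {(i, j). \<exists>l. D $ i $ l \<noteq> 0 \<and> D $ j $ l \<noteq> 0 \<and> i \<noteq> j}"

definition connected_incidence :: "real^'e^'n \<Rightarrow> bool" where
  "connected_incidence D \<longleftrightarrow> (\<forall>i j. (i, j) \<in> (adj D)\<^sup>*)"

text \<open>Characteristic matrix of a clustering (partition of the nodes into the
  nonempty clusters indexed by 'r).\<close>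
definition clustering_matrix :: "real^'r^'n \<Rightarrow> bool" where
  "clustering_matrix P \<longleftrightarrow>
     (\<forall>i j. P $ i $ j = 0 \<or> P $ i $ j = 1) \<and>
     (\<forall>i. \<exists>!j. P $ i $ j = 1) \<and>
     (\<forall>j. \<exists>i. P $ i $ j = 1)"

text \<open>Columns of the reduced incidence matrix: the distinct nonzero columns of
  \<Pi>^T D.  They are used as the index set of the reduced edges.\<close>
definition reduced_edges :: "real^'r^'n \<Rightarrow> real^'e^'n \<Rightarrow> (real^'r) set" where
  "reduced_edges P D = {c. c \<in> columns (transpose P ** D) \<and> c \<noteq> 0}"

text \<open>Reduced Laplacian \<hat>D \<hat>W \<hat>D^T = sum over reduced edges c of \<hat>w(c) c c^T.\<close>
definition reduced_laplacian :: "real^'r^'n \<Rightarrow> real^'e^'n \<Rightarrow> (real^'r \<Rightarrow> real) \<Rightarrow> real^'r^'r" where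
  "reduced_laplacian P D wh =
     (\<Sum>c\<in>reduced_edges P D. wh c *\<^sub>R (\<chi> i j. c $ i * c $ j))"

text \<open>Transfer function of  E x' = -L x + F u, y = H x:
  s \<mapsto> H (s I + E^{-1} L)^{-1} E^{-1} F.\<close>
definition transfer_fun ::
  "real^'x^'q \<Rightarrow> ('x::finite \<Rightarrow> real) \<Rightarrow> real^'x^'x \<Rightarrow> real^'p^'x \<Rightarrow> complex \<Rightarrow> complex^'p^'q" where
  "transfer_fun H e L F s =
     cmat H ** matrix_inv (mat s + cmat (diagm (\<lambda>i. inverse (e i)) ** L))
       ** cmat (diagm (\<lambda>i. inverse (e i)) ** F)"

definition bibo_stable :: "(complex \<Rightarrow> complex^'p^'q) \<Rightarrow> bool" where
  "bibo_stable G \<longleftrightarrow> (\<forall>i j z. is_pole (\<lambda>s. G s $ i $ j) z \<longrightarrow> Re z < 0)"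

end

theory Submission
  imports Defs
begin

text \<open>Both transfer functions have the form \<open>H (s I + E\<^sup>-\<^sup>1 L)\<^sup>-\<^sup>1 E\<^sup>-\<^sup>1 F\<close> with \<open>L\<close> the
  weighted Laplacian \<open>\<Sum>\<^sub>k w\<^sub>k c\<^sub>k c\<^sub>k\<^sup>T\<close> of a connected graph. From the Hermitian form
  \<open>v\<^sup>* (s E + L) v = s \<Sum>\<^sub>i e\<^sub>i |v\<^sub>i|\<^sup>2 + \<Sum>\<^sub>k w\<^sub>k |c\<^sub>k\<^sup>T v|\<^sup>2\<close> the matrix \<open>s I + E\<^sup>-\<^sup>1 L\<close> is
  invertible for \<open>Re s \<ge> 0\<close>, \<open>s \<noteq> 0\<close>, so a pole in the closed right half plane can only
  sit at \<open>0\<close>. There the resolvent splits into \<open>P / s\<close> plus a part regular at \<open>0\<close>, where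
  \<open>P = 1 e\<^sup>T / tr E\<close> projects onto the kernel \<open>span 1\<close>; so the pole at \<open>0\<close> has residue
  \<open>H 1 1\<^sup>T F / tr E\<close>. Since \<open>\<Pi> 1 = 1\<close>, the reduced system has residue
  \<open>\<alpha> \<beta> H 1 1\<^sup>T F / tr \<hat>E\<close>, and \<open>\<alpha> \<beta> = tr \<hat>E / tr E\<close> makes the two cancel in the error
  system.\<close>

no_notation fps_nth (infixl \<open>$\<close> 75)

section \<open>Matrix algebra\<close>

lemma mat_matrix_mult_nth [simp]:
  fixes A :: "'a::semiring_1^'m^'n"
  shows "(mat c ** A) $ i $ j = c * A $ i $ j"
  by (simp add: matrix_matrix_mult_def mat_def if_distrib if_distribR cong: if_cong)

lemma matrix_mult_mat_nth [simp]:
  fixes A :: "'a::semiring_1^'m^'n"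
  shows "(A ** mat c) $ i $ j = A $ i $ j * c"
  by (simp add: matrix_matrix_mult_def mat_def if_distrib if_distribR cong: if_cong)

lemma mat_matrix_mult_vec_nth [simp]:
  fixes v :: "'a::semiring_1^'n"
  shows "(mat c *v v) $ i = c * v $ i"
  by (simp add: matrix_vector_mult_def mat_def if_distrib if_distribR cong: if_cong)

lemma diagm_matrix_mult_nth [simp]: "(diagm d ** A) $ i $ j = d i * A $ i $ j"
  by (simp add: matrix_matrix_mult_def diagm_def if_distrib if_distribR cong: if_cong)

lemma matrix_mult_mat_commute:
  fixes A :: "'a::comm_semiring_1^'m^'n"
  shows "A ** mat c = mat c ** A"
  by (simp add: vec_eq_iff mult.commute)

lemma matrix_mult_mat_left_commute:
  fixes A :: "'a::comm_semiring_1^'n^'m"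
  shows "A ** (mat c ** B) = mat c ** (A ** B)"
  by (simp add: matrix_mul_assoc matrix_mult_mat_commute)

lemma mat_mult_mat: "mat a ** mat b = (mat (a * b) :: 'a::comm_semiring_1^'n^'n)"
  by (simp add: vec_eq_iff) (simp add: mat_def)

lemma matrix_add_rdistrib:
  fixes A :: "'a::comm_semiring_1^'m^'n"
  shows "(A + B) ** C = A ** C + B ** C"
  by (simp add: vec_eq_iff matrix_matrix_mult_def distrib_right sum.distrib)

lemma matrix_diff_ldistrib:
  fixes A :: "'a::comm_ring_1^'m^'n"
  shows "A ** (B - C) = A ** B - A ** C"
  by (simp add: vec_eq_iff matrix_matrix_mult_def right_diff_distrib sum_subtractf)

lemma cmat_mult: "cmat (A ** B) = cmat A ** cmat B"
  by (simp add: vec_eq_iff cmat_def matrix_matrix_mult_def)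

lemma cmat_zero: "cmat 0 = 0"
  by (simp add: vec_eq_iff cmat_def)

lemma cmat_mult_vec_nth: "(cmat A *v v) $ i = (\<Sum>j\<in>UNIV. of_real (A $ i $ j) * v $ j)"
  by (simp add: matrix_vector_mult_def cmat_def)

lemma det_nonzero_if_trivial_kernel:
  fixes A :: "'a::field^'n^'n"
  assumes "\<And>v. A *v v = 0 \<Longrightarrow> v = 0"
  shows "det A \<noteq> 0"
  using assms invertible_det_nz invertible_left_inverse matrix_left_invertible_ker by blast

lemma matrix_inv_right:
  fixes A :: "'a::field^'n^'n"
  assumes "det A \<noteq> 0"
  shows "A ** matrix_inv A = mat 1"
proof -
  have "\<exists>A'. A ** A' = mat 1 \<and> A' ** A = mat 1"
    using assms invertible_det_nz invertible_def by blast
  then show ?thesis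
    unfolding matrix_inv_def by (rule someI_ex[THEN conjunct1])
qed

lemma matrix_inv_unique:
  fixes A :: "'a::field^'n^'n"
  assumes "A ** B = mat 1"
  shows "matrix_inv A = B"
proof -
  have "det A \<noteq> 0"
    using assms invertible_det_nz invertible_right_inverse by blast
  then have "matrix_inv A ** A = mat 1"
    using matrix_inv_right matrix_left_right_inverse by blast
  then have "matrix_inv A = matrix_inv A ** (A ** B)"
    using assms by simp
  also have "\<dots> = B"
    by (simp add: matrix_mul_assoc \<open>matrix_inv A ** A = mat 1\<close>)
  finally show ?thesis .
qed

lemma matrix_inv_nth_cramer:
  fixes A :: "'a::field^'n^'n"
  assumes "det A \<noteq> 0"
  shows "matrix_inv A $ k $ j =
    det (\<chi> i l. if l = k then (if i = j then 1 else 0) else A $ i $ l) / det A"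
proof -
  let ?b = "(\<chi> i. if i = j then 1 else 0) :: 'a^'n"
  have "A *v (matrix_inv A *v ?b) = ?b"
    using matrix_inv_right[OF assms] by (simp add: matrix_vector_mul_assoc)
  then have "(matrix_inv A *v ?b) $ k = det (\<chi> i l. if l = k then ?b $ i else A $ i $ l) / det A"
    using cramer[OF assms] by simp
  moreover have "(matrix_inv A *v ?b) $ k = matrix_inv A $ k $ j"
    by (simp add: matrix_vector_mult_def if_distrib cong: if_cong)
  ultimately show ?thesis
    by (simp cong: if_cong)
qed

text \<open>With \<open>P\<close> the projector onto the kernel of \<open>M\<close> along its range, this splits off the
  pole of the resolvent at \<open>0\<close>; the remainder is regular where \<open>s I + M + P\<close> is invertible.\<close>
lemma resolvent_split:
  fixes M P :: "'a::field^'n^'n"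
  assumes MP: "M ** P = 0" and PM: "P ** M = 0" and PP: "P ** P = P"
    and "s \<noteq> 0" and det_B: "det (mat s + M + P) \<noteq> 0"
  shows "matrix_inv (mat s + M) = mat (inverse s) ** P + matrix_inv (mat s + M + P) ** (mat 1 - P)"
proof (rule matrix_inv_unique)
  let ?B = "mat s + M + P" and ?Y = "matrix_inv (mat s + M + P)"
  have BY: "?B ** ?Y = mat 1"
    by (rule matrix_inv_right[OF det_B])
  then have YB: "?Y ** ?B = mat 1"
    using matrix_left_right_inverse by blast
  have AP: "(mat s + M) ** P = mat s ** P"
    by (simp add: matrix_add_rdistrib MP)
  have "P ** ?B = ?B ** P"
    by (simp add: matrix_add_ldistrib matrix_add_rdistrib MP PM matrix_mult_mat_commute)
  have YP: "?Y ** P = P ** ?Y"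
  proof -
    have "?Y ** P = ?Y ** (P ** ?B) ** ?Y"
      by (simp add: BY flip: matrix_mul_assoc)
    also have "\<dots> = (?Y ** ?B) ** P ** ?Y"
      by (simp add: \<open>P ** ?B = ?B ** P\<close> matrix_mul_assoc)
    finally show ?thesis
      by (simp add: YB)
  qed
  have "(mat s + M) ** (mat (inverse s) ** P) = mat (inverse s) ** ((mat s + M) ** P)"
    by (rule matrix_mult_mat_left_commute)
  also have "\<dots> = mat (inverse s) ** (mat s ** P)"
    by (simp only: AP)
  also have "\<dots> = P"
    using \<open>s \<noteq> 0\<close> by (simp add: matrix_mul_assoc mat_mult_mat)
  finally have "(mat s + M) ** (mat (inverse s) ** P) = P" .
  moreover have "(mat s + M) ** (?Y ** (mat 1 - P)) = mat 1 - P"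
  proof -
    have "(mat s + M) ** (?Y ** (mat 1 - P)) = ?B ** (?Y ** (mat 1 - P)) - P ** (?Y ** (mat 1 - P))"
      by (simp add: matrix_add_rdistrib)
    also have "\<dots> = (?B ** ?Y) ** (mat 1 - P) - (P ** ?Y) ** (mat 1 - P)"
      by (simp only: matrix_mul_assoc)
    also have "(P ** ?Y) ** (mat 1 - P) = ?Y ** (P ** (mat 1 - P))"
      by (simp add: YP matrix_mul_assoc)
    finally show ?thesis
      by (simp add: BY matrix_diff_ldistrib PP)
  qed
  ultimately show "(mat s + M) ** (mat (inverse s) ** P + ?Y ** (mat 1 - P)) = mat 1"
    by (simp add: matrix_add_ldistrib)
qed

section \<open>Continuity and poles\<close>

lemma isCont_det:
  fixes A :: "complex \<Rightarrow> complex^'n^'n"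
  assumes "\<And>i j. isCont (\<lambda>s. A s $ i $ j) z"
  shows "isCont (\<lambda>s. det (A s)) z"
  unfolding det_def by (intro continuous_intros assms)

lemma isCont_mat_add_nth:
  fixes A :: "complex^'n^'n"
  shows "isCont (\<lambda>s. (mat s + A) $ i $ j) z"
  by (cases "i = j") (simp_all add: mat_def)

lemma isCont_matrix_mult_nth:
  fixes A :: "complex \<Rightarrow> complex^'m^'n" and B :: "complex \<Rightarrow> complex^'k^'m"
  assumes "\<And>i j. isCont (\<lambda>s. A s $ i $ j) z" and "\<And>i j. isCont (\<lambda>s. B s $ i $ j) z"
  shows "isCont (\<lambda>s. (A s ** B s) $ i $ j) z"
  unfolding matrix_matrix_mult_def by (simp, intro continuous_intros assms)

lemma isCont_matrix_inv_nth:
  fixes A :: "complex \<Rightarrow> complex^'n^'n"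
  assumes cont: "\<And>i j. isCont (\<lambda>s. A s $ i $ j) z" and det_A: "det (A z) \<noteq> 0"
  shows "isCont (\<lambda>s. matrix_inv (A s) $ k $ j) z"
proof -
  define N where "N s = det (\<chi> i l. if l = k then (if i = j then 1 else 0) else A s $ i $ l) / det (A s)"
    for s
  have "isCont (\<lambda>s. det (A s)) z"
    by (rule isCont_det[OF cont])
  moreover have "isCont (\<lambda>s. det (\<chi> i l. if l = k then (if i = j then 1 else 0) else A s $ i $ l)) z"
  proof (rule isCont_det)
    fix i l
    show "isCont (\<lambda>s. (\<chi> i l. if l = k then (if i = j then 1 else 0) else A s $ i $ l) $ i $ l) z"
      by (cases "l = k") (simp_all add: cont)
  qed
  ultimately have "isCont N z"
    unfolding N_def using det_A by (intro isCont_divide)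
  have "\<forall>\<^sub>F s in at z. det (A s) \<noteq> 0"
    using \<open>isCont (\<lambda>s. det (A s)) z\<close> det_A unfolding isCont_def by (rule tendsto_imp_eventually_ne)
  then have "\<forall>\<^sub>F s in at z. N s = matrix_inv (A s) $ k $ j"
    by eventually_elim (simp add: N_def matrix_inv_nth_cramer)
  with \<open>isCont N z\<close> have "((\<lambda>s. matrix_inv (A s) $ k $ j) \<longlongrightarrow> N z) (at z)"
    unfolding isCont_def by (rule Lim_transform_eventually)
  then show ?thesis
    using det_A by (simp add: isCont_def N_def matrix_inv_nth_cramer)
qed

lemma not_is_pole_if_tendsto:
  fixes f :: "complex \<Rightarrow> complex"
  assumes "(f \<longlongrightarrow> l) (at z)"
  shows "\<not> is_pole f z"
  using not_tendsto_and_filterlim_at_infinity[OF at_neq_bot assms] unfolding is_pole_def by blast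

lemma cnj_mult_self: "cnj z * z = complex_of_real ((cmod z)\<^sup>2)"
  by (metis complex_norm_square mult.commute of_real_power)

lemma bibo_stable_diff_if_common_residue:
  fixes G1 G2 :: "complex \<Rightarrow> complex^'p^'q" and R :: "complex^'p^'q"
  assumes cont1: "\<And>i j z. Re z \<ge> 0 \<Longrightarrow> z \<noteq> 0 \<Longrightarrow> isCont (\<lambda>s. G1 s $ i $ j) z"
    and cont2: "\<And>i j z. Re z \<ge> 0 \<Longrightarrow> z \<noteq> 0 \<Longrightarrow> isCont (\<lambda>s. G2 s $ i $ j) z"
    and regular1: "\<And>i j. \<exists>l. ((\<lambda>s. G1 s $ i $ j - R $ i $ j / s) \<longlongrightarrow> l) (at 0)"
    and regular2: "\<And>i j. \<exists>l. ((\<lambda>s. G2 s $ i $ j - R $ i $ j / s) \<longlongrightarrow> l) (at 0)"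
  shows "bibo_stable (\<lambda>s. G1 s - G2 s)"
  unfolding bibo_stable_def
proof (intro allI impI)
  fix i j z
  assume pole: "is_pole (\<lambda>s. (G1 s - G2 s) $ i $ j) z"
  have "\<exists>l. ((\<lambda>s. (G1 s - G2 s) $ i $ j) \<longlongrightarrow> l) (at z)" if "Re z \<ge> 0"
  proof (cases "z = 0")
    case True
    obtain l1 l2 where "((\<lambda>s. G1 s $ i $ j - R $ i $ j / s) \<longlongrightarrow> l1) (at 0)"
      and "((\<lambda>s. G2 s $ i $ j - R $ i $ j / s) \<longlongrightarrow> l2) (at 0)"
      using regular1 regular2 by blast
    then have "((\<lambda>s. (G1 s $ i $ j - R $ i $ j / s) - (G2 s $ i $ j - R $ i $ j / s))
        \<longlongrightarrow> l1 - l2) (at 0)"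
      by (rule tendsto_diff)
    then show ?thesis
      using True by auto
  next
    case False
    have "((\<lambda>s. G1 s $ i $ j - G2 s $ i $ j) \<longlongrightarrow> G1 z $ i $ j - G2 z $ i $ j) (at z)"
      using cont1[OF that False] cont2[OF that False] unfolding isCont_def by (rule tendsto_diff)
    then show ?thesis
      by auto
  qed
  then show "Re z < 0"
    using pole not_is_pole_if_tendsto by force
qed

section \<open>Laplacian network systems\<close>

text \<open>The residue \<open>H 1 1\<^sup>T F / tr E\<close> at \<open>s = 0\<close> of the transfer function.\<close>
definition zero_residue :: "('n::finite \<Rightarrow> real) \<Rightarrow> real^'n^'q \<Rightarrow> real^'p^'n \<Rightarrow> real^'p^'q" where
  "zero_residue e H F = (\<chi> i j. (\<Sum>k\<in>UNIV. H $ i $ k) * (\<Sum>k\<in>UNIV. F $ k $ j) / tr_diag e)"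

text \<open>\<open>L = \<Sum>\<^sub>k w\<^sub>k c\<^sub>k c\<^sub>k\<^sup>T\<close> with edge vectors \<open>c\<^sub>k\<close>; connectivity of the graph is
  expressed by the last assumption: only constant vectors are orthogonal to every edge vector.\<close>
locale laplacian_network =
  fixes L :: "real^'n::finite^'n" and e :: "'n \<Rightarrow> real"
    and K :: "'k set" and w :: "'k \<Rightarrow> real" and c :: "'k \<Rightarrow> real^'n"
  assumes finite_edges: "finite K"
    and weight_pos: "\<And>k. k \<in> K \<Longrightarrow> w k > 0"
    and timescale_pos: "\<And>i. e i > 0"
    and edge_sum_zero: "\<And>k. k \<in> K \<Longrightarrow> (\<Sum>i\<in>UNIV. c k $ i) = 0"
    and laplacian_eq: "L = (\<Sum>k\<in>K. w k *\<^sub>R (\<chi> i j. c k $ i * c k $ j))"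
    and edge_kernel_const:
      "\<And>v i j. (\<forall>k\<in>K. (\<Sum>i\<in>UNIV. c k $ i * v $ i) = 0) \<Longrightarrow> v $ i = v $ j"
begin

definition scaled_laplacian :: "real^'n^'n" where
  "scaled_laplacian = diagm (\<lambda>i. inverse (e i)) ** L"

text \<open>The projector \<open>1 e\<^sup>T / tr E\<close> onto the kernel of \<open>E\<^sup>-\<^sup>1 L\<close> along its range.\<close>
definition kernel_projector :: "real^'n^'n" where
  "kernel_projector = (\<chi> i j. e j / tr_diag e)"

lemma timescale_nonzero: "e i \<noteq> 0"
  using timescale_pos[of i] by simp

lemma tr_diag_pos: "tr_diag e > 0"
  unfolding tr_diag_def by (rule sum_pos) (auto simp: timescale_pos)

lemma laplacian_nth: "L $ i $ j = (\<Sum>k\<in>K. w k * (c k $ i * c k $ j))"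
  by (simp add: laplacian_eq)

lemma laplacian_row_sum: "(\<Sum>j\<in>UNIV. L $ i $ j) = 0"
proof -
  have "(\<Sum>j\<in>UNIV. L $ i $ j) = (\<Sum>k\<in>K. w k * c k $ i * (\<Sum>j\<in>UNIV. c k $ j))"
    unfolding laplacian_nth by (subst sum.swap) (simp add: sum_distrib_left mult.assoc)
  also have "\<dots> = 0"
    by (simp add: edge_sum_zero)
  finally show ?thesis .
qed

lemma laplacian_column_sum: "(\<Sum>i\<in>UNIV. L $ i $ j) = 0"
  using laplacian_row_sum[of j] by (simp add: laplacian_nth mult.commute)

lemma scaled_laplacian_kernel_projector: "scaled_laplacian ** kernel_projector = 0"
proof -
  have "(L ** kernel_projector) $ i $ j = (\<Sum>k\<in>UNIV. L $ i $ k) * e j / tr_diag e" for i j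
    by (simp add: matrix_matrix_mult_def kernel_projector_def sum_distrib_right sum_divide_distrib)
  then have "L ** kernel_projector = 0"
    by (simp add: vec_eq_iff laplacian_row_sum)
  then show ?thesis
    by (simp add: scaled_laplacian_def flip: matrix_mul_assoc)
qed

lemma kernel_projector_diagm:
  "kernel_projector ** diagm (\<lambda>i. inverse (e i)) = (\<chi> i j. 1 / tr_diag e)"
  by (simp add: vec_eq_iff matrix_matrix_mult_def kernel_projector_def diagm_def
      timescale_nonzero if_distrib if_distribR cong: if_cong)

lemma kernel_projector_scaled_laplacian: "kernel_projector ** scaled_laplacian = 0"
proof -
  have "kernel_projector ** scaled_laplacian = (\<chi> i j. 1 / tr_diag e) ** L"
    by (simp add: scaled_laplacian_def matrix_mul_assoc kernel_projector_diagm)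
  also have "\<dots> = 0"
    by (simp add: vec_eq_iff matrix_matrix_mult_def laplacian_column_sum flip: sum_divide_distrib)
  finally show ?thesis .
qed

lemma kernel_projector_idem: "kernel_projector ** kernel_projector = kernel_projector"
proof -
  have "(kernel_projector ** kernel_projector) $ i $ j = tr_diag e * e j / tr_diag e / tr_diag e"
    for i j
    by (simp add: matrix_matrix_mult_def kernel_projector_def tr_diag_def sum_distrib_right
        sum_divide_distrib)
  then show ?thesis
    using tr_diag_pos by (simp add: vec_eq_iff kernel_projector_def)
qed

lemma zero_residue_eq:
  "H ** kernel_projector ** (diagm (\<lambda>i. inverse (e i)) ** F) = zero_residue e H F"
proof -
  have "H ** kernel_projector ** (diagm (\<lambda>i. inverse (e i)) ** F) =
      H ** ((\<chi> i j. 1 / tr_diag e) ** F)"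
    by (metis matrix_mul_assoc kernel_projector_diagm)
  also have "\<dots> = zero_residue e H F"
    by (simp add: vec_eq_iff zero_residue_def matrix_matrix_mult_def
        flip: sum_distrib_right sum_divide_distrib)
  finally show ?thesis .
qed


lemma laplacian_hermitian_form:
  "(\<Sum>i\<in>UNIV. cnj (v $ i) * (cmat L *v v) $ i) =
    of_real (\<Sum>k\<in>K. w k * (cmod (\<Sum>i\<in>UNIV. of_real (c k $ i) * v $ i))\<^sup>2)"
proof -
  have "(\<Sum>i\<in>UNIV. cnj (v $ i) * (cmat L *v v) $ i) =
      (\<Sum>i\<in>UNIV. \<Sum>j\<in>UNIV. \<Sum>k\<in>K. of_real (w k * c k $ i * c k $ j) * (cnj (v $ i) * v $ j))"
    by (simp add: cmat_mult_vec_nth laplacian_nth sum_distrib_left sum_distrib_right mult_ac)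
  also have "\<dots> = (\<Sum>k\<in>K. \<Sum>i\<in>UNIV. \<Sum>j\<in>UNIV. of_real (w k * c k $ i * c k $ j) * (cnj (v $ i) * v $ j))"
    by (subst sum.swap) (simp add: sum.swap[of _ UNIV K])
  also have "\<dots> = (\<Sum>k\<in>K. of_real (w k) *
      (cnj (\<Sum>i\<in>UNIV. of_real (c k $ i) * v $ i) * (\<Sum>j\<in>UNIV. of_real (c k $ j) * v $ j)))"
    by (simp add: sum_product sum_distrib_left mult_ac)
  also have "\<dots> = of_real (\<Sum>k\<in>K. w k * (cmod (\<Sum>i\<in>UNIV. of_real (c k $ i) * v $ i))\<^sup>2)"
    by (simp only: cnj_mult_self of_real_mult of_real_sum)
  finally show ?thesis .
qed

lemma laplacian_kernel_const:
  assumes "cmat L *v v = 0"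
  shows "v $ i = v $ j"
proof -
  have "complex_of_real (\<Sum>k\<in>K. w k * (cmod (\<Sum>i\<in>UNIV. of_real (c k $ i) * v $ i))\<^sup>2) = 0"
    unfolding laplacian_hermitian_form[symmetric] using assms by simp
  then have "(\<Sum>k\<in>K. w k * (cmod (\<Sum>i\<in>UNIV. of_real (c k $ i) * v $ i))\<^sup>2) = 0"
    by (simp only: of_real_eq_0_iff)
  moreover have "0 \<le> w k * (cmod (\<Sum>i\<in>UNIV. of_real (c k $ i) * v $ i))\<^sup>2" if "k \<in> K" for k
    using weight_pos[OF that] by simp
  ultimately have "\<forall>k\<in>K. w k * (cmod (\<Sum>i\<in>UNIV. of_real (c k $ i) * v $ i))\<^sup>2 = 0"
    by (simp add: sum_nonneg_eq_0_iff[OF finite_edges])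
  then have edge: "\<forall>k\<in>K. (\<Sum>i\<in>UNIV. of_real (c k $ i) * v $ i) = 0"
    using weight_pos by force
  have "(\<chi> i. f (v $ i)) $ i = (\<chi> i. f (v $ i)) $ j" if f: "f = Re \<or> f = Im" for f
  proof (rule edge_kernel_const, intro ballI)
    fix k assume "k \<in> K"
    then have "f (\<Sum>i\<in>UNIV. of_real (c k $ i) * v $ i) = 0"
      using edge f by auto
    then show "(\<Sum>i\<in>UNIV. c k $ i * (\<chi> i. f (v $ i)) $ i) = 0"
      using f by (auto simp: Re_sum Im_sum)
  qed
  then show ?thesis
    by (simp add: complex_eq_iff)
qed

lemma scaled_laplacian_mult_vec_nth:
  "(cmat scaled_laplacian *v v) $ i = (cmat L *v v) $ i / of_real (e i)"
  unfolding cmat_mult_vec_nth scaled_laplacian_def sum_divide_distrib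
  by (simp add: divide_inverse mult_ac)

lemma kernel_projector_mult_vec_nth:
  "(cmat kernel_projector *v v) $ i = (\<Sum>j\<in>UNIV. of_real (e j / tr_diag e) * v $ j)"
  by (simp add: cmat_mult_vec_nth kernel_projector_def)

lemma laplacian_mult_vec_sum: "(\<Sum>i\<in>UNIV. (cmat L *v v) $ i) = 0"
  unfolding cmat_mult_vec_nth
  by (subst sum.swap) (simp add: laplacian_column_sum flip: sum_distrib_right of_real_sum)

lemma det_resolvent_nonzero:
  assumes "Re z \<ge> 0" and "z \<noteq> 0"
  shows "det (mat z + cmat scaled_laplacian) \<noteq> 0"
proof (rule det_nonzero_if_trivial_kernel, rule ccontr)
  fix v
  assume kernel: "(mat z + cmat scaled_laplacian) *v v = 0" and "v \<noteq> 0"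
  have Lv: "(cmat L *v v) $ i = - z * of_real (e i) * v $ i" for i
  proof -
    have "z * v $ i + (cmat L *v v) $ i / of_real (e i) = 0"
      using arg_cong[OF kernel, of "\<lambda>x. x $ i"]
      by (simp add: matrix_vector_mult_add_rdistrib scaled_laplacian_mult_vec_nth)
    then show ?thesis
      using timescale_nonzero[of i] by (simp add: field_simps) (simp add: eq_neg_iff_add_eq_0)
  qed
  define A where "A = (\<Sum>i\<in>UNIV. e i * (cmod (v $ i))\<^sup>2)"
  define B where "B = (\<Sum>k\<in>K. w k * (cmod (\<Sum>i\<in>UNIV. of_real (c k $ i) * v $ i))\<^sup>2)"
  have "cnj (v $ i) * (cmat L *v v) $ i = - z * of_real (e i * (cmod (v $ i))\<^sup>2)" for i
    by (simp add: Lv cnj_mult_self flip: mult.assoc)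
  then have form: "of_real B = - z * of_real A"
    unfolding B_def A_def laplacian_hermitian_form[symmetric]
    by (simp add: sum_distrib_left)
  have Im: "Im z * A = 0"
    using arg_cong[where f = Im, OF form] by simp
  have Re: "Re z * A = - B"
    using arg_cong[where f = Re, OF form] by simp
  obtain i where "v $ i \<noteq> 0"
    using \<open>v \<noteq> 0\<close> by (auto simp: vec_eq_iff)
  then have "A > 0"
    unfolding A_def using timescale_pos by (intro sum_pos2[where i = i]) (auto simp: less_imp_le)
  moreover have "B \<ge> 0"
    unfolding B_def using weight_pos by (intro sum_nonneg) (simp add: less_imp_le)
  ultimately have "Re z * A = 0"
    using Re \<open>Re z \<ge> 0\<close> by (smt (verit) mult_nonneg_nonneg)
  then have "Re z = 0" and "Im z = 0"
    using Im \<open>A > 0\<close> by simp_all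
  then show False
    using \<open>z \<noteq> 0\<close> by (simp add: complex_eq_iff)
qed

lemma det_add_kernel_projector_nonzero: "det (cmat scaled_laplacian + cmat kernel_projector) \<noteq> 0"
proof (rule det_nonzero_if_trivial_kernel)
  fix v
  assume kernel: "(cmat scaled_laplacian + cmat kernel_projector) *v v = 0"
  define \<sigma> where "\<sigma> = (\<Sum>j\<in>UNIV. of_real (e j / tr_diag e) * v $ j)"
  have Lv: "(cmat L *v v) $ i = - of_real (e i) * \<sigma>" for i
  proof -
    have "(cmat L *v v) $ i / of_real (e i) + \<sigma> = 0"
      using arg_cong[OF kernel, of "\<lambda>x. x $ i"]
      by (simp add: matrix_vector_mult_add_rdistrib scaled_laplacian_mult_vec_nth
          kernel_projector_mult_vec_nth \<sigma>_def)
    then show ?thesis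
      using timescale_nonzero[of i] by (simp add: field_simps) (simp add: eq_neg_iff_add_eq_0 add.commute)
  qed
  then have "of_real (tr_diag e) * \<sigma> = 0"
    using laplacian_mult_vec_sum[of v] by (simp add: tr_diag_def sum_distrib_right sum_negf)
  then have "\<sigma> = 0"
    using tr_diag_pos by simp
  then have "cmat L *v v = 0"
    by (simp add: vec_eq_iff Lv)
  then have const: "v $ j = v $ i" for i j
    by (rule laplacian_kernel_const)
  have "\<sigma> = v $ i" for i
  proof -
    have "\<sigma> = (\<Sum>j\<in>UNIV. of_real (e j / tr_diag e)) * v $ i"
      unfolding \<sigma>_def sum_distrib_right
    proof (rule sum.cong)
      show "of_real (e j / tr_diag e) * v $ j = of_real (e j / tr_diag e) * v $ i" for j
        using const[of j i] by simp
    qed simp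
    also have "(\<Sum>j\<in>UNIV. of_real (e j / tr_diag e)) = (1::complex)"
      using tr_diag_pos by (simp add: tr_diag_def flip: sum_divide_distrib of_real_sum)
    finally show ?thesis
      by simp
  qed
  then show "v = 0"
    using \<open>\<sigma> = 0\<close> by (simp add: vec_eq_iff)
qed

lemma transfer_fun_eq:
  "transfer_fun H e L F s =
    cmat H ** matrix_inv (mat s + cmat scaled_laplacian) ** cmat (diagm (\<lambda>i. inverse (e i)) ** F)"
  by (simp add: transfer_fun_def scaled_laplacian_def)

lemma transfer_fun_isCont:
  assumes "Re z \<ge> 0" and "z \<noteq> 0"
  shows "isCont (\<lambda>s. transfer_fun H e L F s $ i $ j) z"
  unfolding transfer_fun_eq
  by (intro isCont_matrix_mult_nth isCont_matrix_inv_nth isCont_mat_add_nth continuous_const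
      det_resolvent_nonzero assms)

lemma transfer_fun_principal_part:
  "\<exists>l. ((\<lambda>s. transfer_fun H e L F s $ i $ j - cmat (zero_residue e H F) $ i $ j / s) \<longlongrightarrow> l) (at 0)"
proof -
  let ?M = "cmat scaled_laplacian" and ?P = "cmat kernel_projector"
    and ?C = "cmat (diagm (\<lambda>i. inverse (e i)) ** F)"
  define g where "g s = (cmat H ** (matrix_inv (mat s + ?M + ?P) ** (mat 1 - ?P)) ** ?C) $ i $ j"
    for s
  have entries: "isCont (\<lambda>s. (mat s + ?M + ?P) $ k $ l) z" for k l z
    unfolding add.assoc by (rule isCont_mat_add_nth)
  have det0: "det (mat 0 + ?M + ?P) \<noteq> 0"
    using det_add_kernel_projector_nonzero by simp
  have "isCont g 0"
    unfolding g_def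
    by (intro isCont_matrix_mult_nth isCont_matrix_inv_nth continuous_const entries det0)
  have MP: "?M ** ?P = 0" and PM: "?P ** ?M = 0" and PP: "?P ** ?P = ?P"
    by (simp_all add: scaled_laplacian_kernel_projector kernel_projector_scaled_laplacian kernel_projector_idem
        cmat_zero flip: cmat_mult)
  have "\<forall>\<^sub>F s in at 0. det (mat s + ?M + ?P) \<noteq> 0"
    using isCont_det[OF entries] det0 unfolding isCont_def by (rule tendsto_imp_eventually_ne)
  moreover have "\<forall>\<^sub>F s in at 0. s \<noteq> 0"
    by (simp add: eventually_at_filter)
  ultimately have "\<forall>\<^sub>F s in at 0.
      g s = transfer_fun H e L F s $ i $ j - cmat (zero_residue e H F) $ i $ j / s"
  proof eventually_elim
    case (elim s)
    have "transfer_fun H e L F s =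
        cmat H ** (mat (inverse s) ** ?P + matrix_inv (mat s + ?M + ?P) ** (mat 1 - ?P)) ** ?C"
      unfolding transfer_fun_eq using resolvent_split[OF MP PM PP] elim by simp
    also have "\<dots> = mat (inverse s) ** (cmat H ** ?P ** ?C) +
        cmat H ** (matrix_inv (mat s + ?M + ?P) ** (mat 1 - ?P)) ** ?C"
      by (simp only: matrix_add_ldistrib matrix_add_rdistrib matrix_mul_assoc
          matrix_mult_mat_commute)
    also have "cmat H ** ?P ** ?C = cmat (zero_residue e H F)"
      by (simp add: zero_residue_eq flip: cmat_mult)
    finally show ?case
      by (simp add: g_def divide_inverse mult.commute)
  qed
  with \<open>isCont g 0\<close> show ?thesis
    unfolding isCont_def by (intro exI) (rule Lim_transform_eventually)
qed

end

section \<open>Incidence matrices and clusterings\<close>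

lemma incidence_column_mult_sum:
  fixes D :: "real^'e^'n"
  assumes "incidence_matrix D"
  obtains i j where "\<And>k. D $ k $ l \<noteq> 0 \<longleftrightarrow> k = i \<or> k = j"
    and "\<And>u. (\<Sum>k\<in>UNIV. D $ k $ l * u k) = u i - u j"
proof -
  obtain i j where ij: "i \<noteq> j" "D $ i $ l = 1" "D $ j $ l = -1"
    and zero: "\<And>k. k \<noteq> i \<and> k \<noteq> j \<longrightarrow> D $ k $ l = 0"
    using assms unfolding incidence_matrix_def by blast
  have "(\<Sum>k\<in>UNIV. D $ k $ l * u k) = u i - u j" for u
  proof -
    have "(\<Sum>k\<in>UNIV. D $ k $ l * u k) = (\<Sum>k\<in>{i, j}. D $ k $ l * u k)"
      by (rule sum.mono_neutral_right) (use zero in auto)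
    then show ?thesis
      using ij by simp
  qed
  moreover have "D $ k $ l \<noteq> 0 \<longleftrightarrow> k = i \<or> k = j" for k
    using ij zero by auto
  ultimately show ?thesis
    using that by blast
qed

lemma incidence_column_sum:
  fixes D :: "real^'e^'n"
  assumes "incidence_matrix D"
  shows "(\<Sum>k\<in>UNIV. D $ k $ l) = 0"
proof -
  obtain i j where "\<And>u. (\<Sum>k\<in>UNIV. D $ k $ l * u k) = u i - u j"
    using incidence_column_mult_sum[OF assms] by metis
  from this[of "\<lambda>_. 1"] show ?thesis
    by simp
qed

lemma incidence_kernel_const:
  fixes D :: "real^'e^'n" and u :: "'n \<Rightarrow> real"
  assumes "incidence_matrix D" and "connected_incidence D"
    and kernel: "\<And>l. (\<Sum>k\<in>UNIV. D $ k $ l * u k) = 0"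
  shows "u a = u b"
proof -
  have adjacent: "u x = u y" if xy: "(x, y) \<in> adj D" for x y
  proof -
    obtain l where l: "D $ x $ l \<noteq> 0" "D $ y $ l \<noteq> 0"
      using xy unfolding adj_def by blast
    obtain i j where "\<And>k. D $ k $ l \<noteq> 0 \<longleftrightarrow> k = i \<or> k = j"
      and "(\<Sum>k\<in>UNIV. D $ k $ l * u k) = u i - u j"
      using incidence_column_mult_sum[OF assms(1), where l = l] by metis
    then show ?thesis
      using l kernel[of l] by auto
  qed
  have "(a, b) \<in> (adj D)\<^sup>*"
    using assms(2) unfolding connected_incidence_def by blast
  then show ?thesis
    by (induction rule: rtrancl_induct) (auto dest: adjacent)
qed

lemma incidence_laplacian_eq:
  fixes D :: "real^'e^'n"
  shows "D ** diagm w ** transpose D =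
    (\<Sum>l\<in>UNIV. w l *\<^sub>R (\<chi> i j. column l D $ i * column l D $ j))"
  by (simp add: vec_eq_iff matrix_matrix_mult_def diagm_def transpose_def column_def
      if_distrib if_distribR mult_ac cong: if_cong)

lemma laplacian_network_incidence:
  fixes D :: "real^'e^'n"
  assumes "incidence_matrix D" and "connected_incidence D" and "\<forall>l. w l > 0" and "\<forall>i. e i > 0"
  shows "laplacian_network (D ** diagm w ** transpose D) e UNIV w (\<lambda>l. column l D)"
proof
  show "(\<Sum>i\<in>UNIV. column l D $ i) = 0" for l
    using incidence_column_sum[OF assms(1)] by (simp add: column_def)
  show "v $ i = v $ j" if "\<forall>l\<in>UNIV. (\<Sum>i\<in>UNIV. column l D $ i * v $ i) = 0" for v :: "real^'n" and i j
    using incidence_kernel_const[OF assms(1,2), of "\<lambda>i. v $ i"] that by (simp add: column_def)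
qed (use assms incidence_laplacian_eq in auto)

lemma clustering_row:
  fixes P :: "real^'r^'n"
  assumes "clustering_matrix P" and "P $ i $ a = 1"
  shows "P $ i $ b = (if b = a then 1 else 0)"
  using assms unfolding clustering_matrix_def by metis

lemma clustering_row_sum:
  fixes P :: "real^'r^'n"
  assumes "clustering_matrix P"
  shows "(\<Sum>a\<in>UNIV. P $ i $ a) = 1"
proof -
  obtain a where "P $ i $ a = 1"
    using assms unfolding clustering_matrix_def by blast
  then show ?thesis
    using clustering_row[OF assms] by simp
qed

lemma clustering_mult_row_sum:
  fixes P :: "real^'r^'n"
  assumes "clustering_matrix P"
  shows "(\<Sum>a\<in>UNIV. (H ** P) $ i $ a) = (\<Sum>k\<in>UNIV. H $ i $ k)"
  unfolding matrix_matrix_mult_def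
  by (simp add: sum.swap[of _ UNIV] clustering_row_sum[OF assms] flip: sum_distrib_left)

lemma clustering_transpose_mult_column_sum:
  fixes P :: "real^'r^'n"
  assumes "clustering_matrix P"
  shows "(\<Sum>a\<in>UNIV. (transpose P ** F) $ a $ j) = (\<Sum>k\<in>UNIV. F $ k $ j)"
  unfolding matrix_matrix_mult_def transpose_def
  by (simp add: sum.swap[of _ UNIV] clustering_row_sum[OF assms] flip: sum_distrib_right)

lemma zero_residue_clustered:
  fixes P :: "real^'r^'n"
  assumes "clustering_matrix P" and "tr_diag eh \<noteq> 0" and "\<alpha> * \<beta> = tr_diag eh / tr_diag e"
  shows "zero_residue eh (\<alpha> *\<^sub>R (H ** P)) (\<beta> *\<^sub>R (transpose P ** F)) = zero_residue e H F"
proof -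
  have "\<alpha> * X * (\<beta> * Y) / tr_diag eh = X * Y / tr_diag e" for X Y
    using assms(2,3) by (simp add: field_simps)
  then show ?thesis
    by (simp add: vec_eq_iff zero_residue_def clustering_mult_row_sum[OF assms(1)]
        clustering_transpose_mult_column_sum[OF assms(1)] flip: sum_distrib_left)
qed

lemma reduced_edges_finite: "finite (reduced_edges P D)"
proof (rule finite_subset)
  show "reduced_edges P D \<subseteq> range (\<lambda>l. column l (transpose P ** D))"
    by (auto simp: reduced_edges_def columns_def)
qed simp

lemma transpose_mult_column_nth:
  "column l (transpose P ** D) $ a = (\<Sum>i\<in>UNIV. P $ i $ a * D $ i $ l)"
  by (simp add: column_def matrix_matrix_mult_def transpose_def)

lemma reduced_edge_sum_zero:
  fixes D :: "real^'e^'n" and P :: "real^'r^'n"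
  assumes "incidence_matrix D" and "clustering_matrix P" and "c \<in> reduced_edges P D"
  shows "(\<Sum>a\<in>UNIV. c $ a) = 0"
proof -
  obtain l where c: "c = column l (transpose P ** D)"
    using assms(3) by (auto simp: reduced_edges_def columns_def)
  have "(\<Sum>a\<in>UNIV. \<Sum>i\<in>UNIV. P $ i $ a * D $ i $ l) = (\<Sum>i\<in>UNIV. D $ i $ l * (\<Sum>a\<in>UNIV. P $ i $ a))"
    by (subst sum.swap) (simp add: sum_distrib_left mult_ac)
  also have "\<dots> = 0"
    using clustering_row_sum[OF assms(2)] incidence_column_sum[OF assms(1)] by simp
  finally show ?thesis
    by (simp add: c transpose_mult_column_nth)
qed

lemma reduced_edges_kernel_const:
  fixes D :: "real^'e^'n" and P :: "real^'r^'n"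
  assumes "incidence_matrix D" and "connected_incidence D" and "clustering_matrix P"
    and kernel: "\<forall>c\<in>reduced_edges P D. (\<Sum>a\<in>UNIV. c $ a * v $ a) = 0"
  shows "v $ a = v $ b"
proof -
  define u where "u i = (\<Sum>a\<in>UNIV. P $ i $ a * v $ a)" for i
  have "(\<Sum>i\<in>UNIV. D $ i $ l * u i) = 0" for l
  proof -
    let ?c = "column l (transpose P ** D)"
    have "(\<Sum>i\<in>UNIV. D $ i $ l * u i) = (\<Sum>a\<in>UNIV. ?c $ a * v $ a)"
      unfolding transpose_mult_column_nth u_def
      by (simp add: sum_distrib_left sum_distrib_right mult_ac) (rule sum.swap)
    also have "\<dots> = 0"
      using kernel by (cases "?c = 0") (auto simp: reduced_edges_def columns_def)
    finally show ?thesis .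
  qed
  then have u_const: "u i = u j" for i j
    by (rule incidence_kernel_const[OF assms(1,2)])
  have "\<exists>i. u i = v $ x" for x
  proof -
    obtain i where i: "P $ i $ x = 1"
      using assms(3) unfolding clustering_matrix_def by blast
    have "u i = v $ x"
      unfolding u_def by (simp add: clustering_row[OF assms(3) i] if_distrib if_distribR cong: if_cong)
    then show ?thesis ..
  qed
  then show ?thesis
    using u_const by metis
qed

lemma laplacian_network_reduced:
  fixes D :: "real^'e^'n" and P :: "real^'r^'n"
  assumes "incidence_matrix D" and "connected_incidence D" and "clustering_matrix P"
    and "\<forall>c\<in>reduced_edges P D. wh c > 0" and "\<forall>k. eh k > 0"
  shows "laplacian_network (reduced_laplacian P D wh) eh (reduced_edges P D) wh id"
  by unfold_locales
    (use assms reduced_edges_finite reduced_edge_sum_zero reduced_edges_kernel_const in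
      \<open>auto simp: reduced_laplacian_def\<close>)

theorem lemma1:
  fixes D :: "real^'e^'n" and w :: "'e \<Rightarrow> real" and e :: "'n \<Rightarrow> real"
    and F :: "real^'p^'n" and H :: "real^'n^'q"
    and P :: "real^'r^'n"
    and wh :: "real^'r \<Rightarrow> real" and eh :: "'r \<Rightarrow> real"
    and \<alpha> \<beta> :: real
  assumes "incidence_matrix D" and "simple_incidence D" and "connected_incidence D"
    and "\<forall>l. w l > 0" and "\<forall>i. e i > 0"
    and "clustering_matrix P"
    and "\<forall>c\<in>reduced_edges P D. wh c > 0" and "\<forall>k. eh k > 0"
    and "\<alpha> * \<beta> = tr_diag eh / tr_diag e"
  shows "bibo_stable (\<lambda>s.
           transfer_fun H e (D ** diagm w ** transpose D) F s
           - transfer_fun (\<alpha> *\<^sub>R (H ** P)) eh (reduced_laplacian P D wh)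
               (\<beta> *\<^sub>R (transpose P ** F)) s)"
proof -
  interpret full: laplacian_network "D ** diagm w ** transpose D" e UNIV w "\<lambda>l. column l D"
    using assms by (intro laplacian_network_incidence) auto
  interpret reduced: laplacian_network "reduced_laplacian P D wh" eh "reduced_edges P D" wh id
    using assms by (intro laplacian_network_reduced) auto
  have "zero_residue eh (\<alpha> *\<^sub>R (H ** P)) (\<beta> *\<^sub>R (transpose P ** F)) = zero_residue e H F"
    using assms reduced.tr_diag_pos by (intro zero_residue_clustered) auto
  then show ?thesis
    using full.transfer_fun_principal_part[of H F]
      reduced.transfer_fun_principal_part[of "\<alpha> *\<^sub>R (H ** P)" "\<beta> *\<^sub>R (transpose P ** F)"]
    by (intro bibo_stable_diff_if_common_residue[where R = "cmat (zero_residue e H F)"]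
        full.transfer_fun_isCont reduced.transfer_fun_isCont) auto
qed

end
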